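(* Let $k\ge 2$, let $a_1\ge a_2\ge\cdots\ge a_k\ge 1$ be integers, and put $t=\sum_{i=1}^k a_i$. Let $G$ be a graph of order $n>t^2-t-1$ which does not contain the disjoint union $\bigcup_{i=1}^k P_{2a_i}$ as a subgraph. If $e(G)\ge (t-1)n-(t^2-t-1)$, then there exists an induced subgraph $H$ of $G$ such that $|V(H)|\ge n-(t^2-t-1)$, $\delta(H)\ge t-1$, and $d_H(v)\le t-2$ for every vertex $v\in V(G)\setminus V(H)$.
   Context: All graphs are finite and simple. $P_m$ is the path on $m$ vertices, $e(G)$ is the number of edges of $G$, $\delta(H)$ the minimum degree of $H$, and $d_H(v)=|N(v)\cap V(H)|$ is the number of neighbours of $v$ lying in $V(H)$. *)

theory Defs
  imports Main
begin

definition simple_graph :: "'a set \<Rightarrow> 'a set set \<Rightarrow> bool" where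
  "simple_graph V E \<longleftrightarrow> finite V \<and> (\<forall>e\<in>E. e \<subseteq> V \<and> card e = 2)"

definition num_edges :: "'a set set \<Rightarrow> nat" where
  "num_edges E = card E"

text \<open>A (not necessarily induced) copy of the path on length xs vertices in G.\<close>
definition is_path :: "'a set \<Rightarrow> 'a set set \<Rightarrow> 'a list \<Rightarrow> bool" where
  "is_path V E xs \<longleftrightarrow> distinct xs \<and> set xs \<subseteq> V \<and>
     (\<forall>i. Suc i < length xs \<longrightarrow> {xs ! i, xs ! Suc i} \<in> E)"

definition contains_linear_forest :: "'a set \<Rightarrow> 'a set set \<Rightarrow> nat \<Rightarrow> (nat \<Rightarrow> nat) \<Rightarrow> bool" where
  "contains_linear_forest V E k a \<longleftrightarrow>
     (\<exists>P :: nat \<Rightarrow> 'a list.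
        (\<forall>i\<in>{1..k}. is_path V E (P i) \<and> length (P i) = 2 * a i) \<and>
        (\<forall>i\<in>{1..k}. \<forall>j\<in>{1..k}. i \<noteq> j \<longrightarrow> set (P i) \<inter> set (P j) = {}))"

text \<open>d_H(v) for the induced subgraph H = G[S]: number of neighbours of v in S.\<close>
definition deg_in :: "'a set set \<Rightarrow> 'a set \<Rightarrow> 'a \<Rightarrow> nat" where
  "deg_in E S v = card {u \<in> S. {v, u} \<in> E}"

end

theory Submission
  imports Defs
begin

(* Peel off, one at a time, vertices of degree less than t - 1, where t = a_1 + ... + a_k.
   What remains is an induced subgraph H = G[S] of minimum degree at least t - 1, and every
   peeled vertex has at most t - 2 neighbours in S. Each peeled vertex takes at most t - 2
   edges with it, so if more than t^2 - t - 1 vertices were peeled, H would have more than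
   (t - 1)|S| edges. By the Erdos-Gallai theorem H would then contain a path on 2t vertices,
   and cutting this path into consecutive segments of 2 a_1, ..., 2 a_k vertices gives the
   forbidden linear forest. *)

lemma is_path_iff_successively:
  "is_path V E xs \<longleftrightarrow> distinct xs \<and> set xs \<subseteq> V \<and> successively (\<lambda>u v. {u, v} \<in> E) xs"
  unfolding is_path_def successively_conv_nth ..

lemma is_path_append:
  "is_path V E (xs @ ys) \<longleftrightarrow> is_path V E xs \<and> is_path V E ys \<and> set xs \<inter> set ys = {} \<and>
     (xs = [] \<or> ys = [] \<or> {last xs, hd ys} \<in> E)"
  unfolding is_path_iff_successively successively_append_iff by auto

lemma is_path_Cons:
  "is_path V E (x # xs) \<longleftrightarrow> x \<in> V \<and> x \<notin> set xs \<and> (xs = [] \<or> {x, hd xs} \<in> E) \<and> is_path V E xs"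
  using is_path_append[of V E "[x]" xs] by (auto simp: is_path_def)

lemma is_path_rev [simp]: "is_path V E (rev xs) \<longleftrightarrow> is_path V E xs"
  unfolding is_path_iff_successively successively_rev by (simp add: insert_commute)

lemma is_path_mono: "is_path V E xs \<Longrightarrow> V \<subseteq> V' \<Longrightarrow> E \<subseteq> E' \<Longrightarrow> is_path V' E' xs"
  unfolding is_path_def by blast

lemma is_path_length_le_card: "finite V \<Longrightarrow> is_path V E xs \<Longrightarrow> length xs \<le> card V"
  unfolding is_path_def by (metis card_mono distinct_card)

lemma is_path_take: "is_path V E xs \<Longrightarrow> is_path V E (take n xs)"
  using is_path_append[of V E "take n xs" "drop n xs"] by simp

lemma is_path_drop: "is_path V E xs \<Longrightarrow> is_path V E (drop n xs)"
  using is_path_append[of V E "take n xs" "drop n xs"] by simp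

definition is_cycle :: "'a set \<Rightarrow> 'a set set \<Rightarrow> 'a list \<Rightarrow> bool" where
  "is_cycle V E C \<longleftrightarrow> is_path V E C \<and> C \<noteq> [] \<and> {last C, hd C} \<in> E"

lemma is_cycle_path_starting_at:
  assumes "is_cycle V E C" "x \<in> set C"
  obtains P where "is_path V E (x # P)" "set (x # P) = set C"
proof -
  obtain ys zs where C: "C = ys @ x # zs" using split_list[OF assms(2)] by blast
  have "is_path V E ((x # zs) @ ys)"
    using assms(1) unfolding is_cycle_def C is_path_append by auto
  then show thesis by (intro that[of "zs @ ys"]) (auto simp: C)
qed

lemma is_path_close_cycle:
  assumes P: "is_path V E P" and i: "Suc i < length P"
    and "{hd P, P ! Suc i} \<in> E" "{P ! i, last P} \<in> E"
  obtains C where "is_cycle V E C" "set C = set P"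
proof
  let ?xs = "take (Suc i) P" and ?ys = "drop (Suc i) P"
  have "is_path V E (?xs @ ?ys)" using P by simp
  then have "is_path V E ?xs" "is_path V E (rev ?ys)" "set ?xs \<inter> set (rev ?ys) = {}"
    unfolding is_path_append by auto
  moreover have "last ?xs = P ! i"
    using i by (simp add: take_Suc_conv_app_nth)
  moreover have "hd (rev ?ys) = last P" "last (rev ?ys) = P ! Suc i" "hd ?xs = hd P"
    using i by (simp_all add: hd_rev last_rev hd_drop_conv_nth)
  moreover have "?xs \<noteq> []" "rev ?ys \<noteq> []" using i by auto
  ultimately show "is_cycle V E (?xs @ rev ?ys)"
    using assms(3,4) unfolding is_cycle_def is_path_append by (simp add: insert_commute)
  show "set (?xs @ rev ?ys) = set P"
    by (metis append_take_drop_id set_append set_rev)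
qed

definition is_longest_path :: "'a set \<Rightarrow> 'a set set \<Rightarrow> 'a list \<Rightarrow> bool" where
  "is_longest_path V E P \<longleftrightarrow> is_path V E P \<and> (\<forall>Q. is_path V E Q \<longrightarrow> length Q \<le> length P)"

lemma longest_path_exists:
  assumes "finite V" shows "\<exists>P. is_longest_path V E P"
proof -
  have "is_path V E []" by (simp add: is_path_def)
  moreover have "\<forall>Q. is_path V E Q \<longrightarrow> length Q < Suc (card V)"
    using is_path_length_le_card[OF assms] by (simp add: less_Suc_eq_le)
  ultimately show ?thesis
    unfolding is_longest_path_def by (rule ex_has_greatest_nat)
qed

lemma longest_path_rev: "is_longest_path V E (rev P) \<longleftrightarrow> is_longest_path V E P"
  unfolding is_longest_path_def is_path_rev length_rev ..

lemma longest_path_Nil: "is_longest_path V E [] \<Longrightarrow> V = {}"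
proof (rule equals0I)
  fix v assume "is_longest_path V E []" "v \<in> V"
  moreover from \<open>v \<in> V\<close> have "is_path V E [v]" by (simp add: is_path_def)
  ultimately show False unfolding is_longest_path_def by fastforce
qed

lemma longest_path_hd_neighbour:
  assumes "is_longest_path V E P" "P \<noteq> []" "u \<in> V" "{hd P, u} \<in> E"
  shows "u \<in> set P"
proof (rule ccontr)
  assume "u \<notin> set P"
  with assms have "is_path V E (u # P)"
    by (auto simp: is_longest_path_def is_path_Cons insert_commute)
  then show False using assms(1) unfolding is_longest_path_def by fastforce
qed

lemma longest_path_last_neighbour:
  assumes "is_longest_path V E P" "P \<noteq> []" "u \<in> V" "{last P, u} \<in> E"
  shows "u \<in> set P"
  using longest_path_hd_neighbour[of V E "rev P"] assms by (simp add: longest_path_rev hd_rev)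

lemma longest_path_cycle_closed:
  assumes P: "is_longest_path V E P" and C: "is_cycle V E C" "set C = set P"
    and "x \<in> set P" "u \<in> V" "{x, u} \<in> E"
  shows "u \<in> set P"
proof (rule ccontr)
  assume u: "u \<notin> set P"
  obtain Q where Q: "is_path V E (x # Q)" "set (x # Q) = set P"
    using is_cycle_path_starting_at[OF C(1)] assms(4) C(2) by metis
  have "length (x # Q) = length P"
    using Q P by (metis distinct_card is_longest_path_def is_path_def)
  moreover have "is_path V E (u # x # Q)"
    using Q u assms(5,6) by (auto simp: is_path_Cons insert_commute)
  ultimately show False using P unfolding is_longest_path_def by fastforce
qed

lemma simple_graph_finite_edges: "simple_graph V E \<Longrightarrow> finite E"
  unfolding simple_graph_def by (meson PowI finite_Pow_iff finite_subset subsetI)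

lemma simple_graph_no_loop: "simple_graph V E \<Longrightarrow> {x} \<notin> E"
  unfolding simple_graph_def by fastforce

lemma simple_graph_edge_subset: "simple_graph V E \<Longrightarrow> {x, u} \<in> E \<Longrightarrow> u \<in> V"
  unfolding simple_graph_def by blast

lemma simple_graph_delete_vertices:
  "simple_graph V E \<Longrightarrow> simple_graph (V - X) {e \<in> E. e \<inter> X = {}}"
  unfolding simple_graph_def by blast

lemma simple_graph_induced:
  "simple_graph V E \<Longrightarrow> S \<subseteq> V \<Longrightarrow> simple_graph S {e \<in> E. e \<subseteq> S}"
  unfolding simple_graph_def by (auto intro: finite_subset)

lemma card_edges_at_vertex:
  assumes "\<forall>e\<in>E. card e = 2" "v \<in> W"
  shows "card {e \<in> E. e \<subseteq> W \<and> v \<in> e} = deg_in E W v"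
proof -
  have "bij_betw (\<lambda>u. {v, u}) {u \<in> W. {v, u} \<in> E} {e \<in> E. e \<subseteq> W \<and> v \<in> e}"
  proof (rule bij_betwI')
    fix e assume e: "e \<in> {e \<in> E. e \<subseteq> W \<and> v \<in> e}"
    then have "card e = 2" using assms(1) by blast
    then obtain x y where xy: "e = {x, y}" unfolding card_2_iff by blast
    moreover have "v = x \<or> v = y" using e xy by blast
    ultimately have "e = {v, y} \<or> e = {v, x}" by (auto simp only: insert_commute)
    with e show "\<exists>u\<in>{u \<in> W. {v, u} \<in> E}. e = {v, u}" by blast
  qed (use assms(2) in \<open>auto simp: doubleton_eq_iff\<close>)
  then show ?thesis unfolding deg_in_def by (simp add: bij_betw_same_card)
qed

lemma card_edges_remove_vertex:
  assumes "\<forall>e\<in>E. card e = 2" "finite W" "v \<in> W"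
  shows "card {e \<in> E. e \<subseteq> W} = card {e \<in> E. e \<subseteq> W - {v}} + deg_in E W v"
proof -
  have "{e \<in> E. e \<subseteq> W} = {e \<in> E. e \<subseteq> W - {v}} \<union> {e \<in> E. e \<subseteq> W \<and> v \<in> e}" by blast
  moreover have "finite {e \<in> E. e \<subseteq> W}"
    using assms(2) by (auto intro: finite_subset[of _ "Pow W"])
  moreover have "{e \<in> E. e \<subseteq> W - {v}} \<inter> {e \<in> E. e \<subseteq> W \<and> v \<in> e} = {}" by blast
  ultimately show ?thesis
    using card_edges_at_vertex[OF assms(1,3)] by (simp add: card_Un_disjoint)
qed

lemma card_edges_meeting_closed_set:
  assumes G: "simple_graph V E" and "X \<subseteq> V" and closed: "\<forall>x\<in>X. \<forall>u. {x, u} \<in> E \<longrightarrow> u \<in> X"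
  shows "card {e \<in> E. e \<inter> X \<noteq> {}} \<le> card X choose 2"
proof -
  have "finite X" using assms(1,2) finite_subset unfolding simple_graph_def by blast
  have "{e \<in> E. e \<inter> X \<noteq> {}} \<subseteq> {Y. Y \<subseteq> X \<and> card Y = 2}"
  proof
    fix e assume "e \<in> {e \<in> E. e \<inter> X \<noteq> {}}"
    then obtain x where x: "e \<in> E" "x \<in> e" "x \<in> X" by blast
    then have "card e = 2" using G unfolding simple_graph_def by blast
    then obtain y z where "e = {y, z}" by (meson card_2_iff)
    with x closed have "e \<subseteq> X" by (auto simp: insert_commute)
    with \<open>card e = 2\<close> show "e \<in> {Y. Y \<subseteq> X \<and> card Y = 2}" by blast
  qed
  then have "card {e \<in> E. e \<inter> X \<noteq> {}} \<le> card {Y. Y \<subseteq> X \<and> card Y = 2}"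
    using \<open>finite X\<close> by (intro card_mono) (auto intro: finite_subset[of _ "Pow X"])
  also have "\<dots> = card X choose 2" using n_subsets[OF \<open>finite X\<close>] by simp
  finally show ?thesis .
qed

lemma deg_le_card_path_positions:
  assumes "simple_graph V E" "{u \<in> V. {x, u} \<in> E} \<subseteq> set P"
  shows "deg_in E V x \<le> card {j. j < length P \<and> {x, P ! j} \<in> E}"
proof -
  have "{u \<in> V. {x, u} \<in> E} \<subseteq> (!) P ` {j. j < length P \<and> {x, P ! j} \<in> E}"
  proof
    fix u assume u: "u \<in> {u \<in> V. {x, u} \<in> E}"
    then obtain j where "j < length P" "u = P ! j" using assms(2) by (metis in_set_conv_nth subsetD)
    with u show "u \<in> (!) P ` {j. j < length P \<and> {x, P ! j} \<in> E}" by blast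
  qed
  then have "deg_in E V x \<le> card ((!) P ` {j. j < length P \<and> {x, P ! j} \<in> E})"
    unfolding deg_in_def by (intro card_mono) auto
  also have "\<dots> \<le> card {j. j < length P \<and> {x, P ! j} \<in> E}"
    by (intro card_image_le) auto
  finally show ?thesis .
qed

(* Posa's crossing argument: the at least t neighbours of each end all lie on P, so as
   |P| < 2t some i has hd P adjacent to P ! Suc i and P ! i adjacent to last P. *)
lemma short_longest_path_spans_cycle:
  assumes G: "simple_graph V E" and P: "is_longest_path V E P" "P \<noteq> []"
    and deg: "\<forall>v\<in>V. t \<le> deg_in E V v" and short: "length P < 2 * t"
  obtains C where "is_cycle V E C" "set C = set P"
proof -
  let ?A = "{j. j < length P \<and> {hd P, P ! j} \<in> E}"
  let ?B = "{j. j < length P \<and> {last P, P ! j} \<in> E}"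
  have path: "is_path V E P" using P(1) unfolding is_longest_path_def ..
  then have ends: "hd P \<in> V" "last P \<in> V" using P(2) unfolding is_path_def by auto
  have "t \<le> card ?A"
    using deg ends(1) deg_le_card_path_positions[OF G, of "hd P" P]
      longest_path_hd_neighbour[OF P] by force
  moreover have "t \<le> card ?B"
    using deg ends(2) deg_le_card_path_positions[OF G, of "last P" P]
      longest_path_last_neighbour[OF P] by force
  moreover have "?A \<subseteq> {1..<length P}"
    using simple_graph_no_loop[OF G] P(2) by (fastforce simp: hd_conv_nth Suc_le_eq intro: gr0I)
  moreover have "Suc ` ?B \<subseteq> {1..<length P}"
  proof safe
    fix j assume j: "j < length P" "{last P, P ! j} \<in> E"
    then have "j \<noteq> length P - 1"
      using simple_graph_no_loop[OF G] P(2) by (metis insert_absorb2 last_conv_nth)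
    with j show "Suc j \<in> {1..<length P}" by simp
  qed
  ultimately have "card ?A + card (Suc ` ?B) > card {1..<length P}"
    using short by (simp add: card_image)
  moreover have "card (?A \<union> Suc ` ?B) \<le> card {1..<length P}"
    using \<open>?A \<subseteq> _\<close> \<open>Suc ` ?B \<subseteq> _\<close> by (intro card_mono) auto
  ultimately have "?A \<inter> Suc ` ?B \<noteq> {}"
    using card_Un_Int[of ?A "Suc ` ?B"] by auto
  then obtain i where "Suc i < length P" "{hd P, P ! Suc i} \<in> E" "{P ! i, last P} \<in> E"
    by (auto simp: insert_commute)
  with path show thesis using is_path_close_cycle that by blast
qed

lemma choose_two_le_of_less_double: "n < 2 * t \<Longrightarrow> n choose 2 \<le> (t - 1) * n"
proof -
  assume "n < 2 * t"
  then have "n * (n - 1) \<le> n * (2 * (t - 1))" by (intro mult_le_mono2) linarith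
  then have "n * (n - 1) div 2 \<le> 2 * ((t - 1) * n) div 2" by (intro div_le_mono) (simp add: ac_simps)
  then show ?thesis unfolding choose_two by simp
qed

lemma short_longest_path_sparse:
  assumes G: "simple_graph V E" and P: "is_longest_path V E P" "P \<noteq> []"
    and "\<forall>v\<in>V. t \<le> deg_in E V v" "length P < 2 * t"
  shows "card {e \<in> E. e \<inter> set P \<noteq> {}} \<le> (t - 1) * card (set P)"
proof -
  have "\<forall>x\<in>set P. \<forall>u. {x, u} \<in> E \<longrightarrow> u \<in> set P"
    using short_longest_path_spans_cycle[OF assms] longest_path_cycle_closed[OF P(1)]
      simple_graph_edge_subset[OF G] by metis
  moreover have "set P \<subseteq> V" "distinct P"
    using P(1) unfolding is_longest_path_def is_path_def by auto
  ultimately have "card {e \<in> E. e \<inter> set P \<noteq> {}} \<le> card (set P) choose 2"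
    using card_edges_meeting_closed_set[OF G] by blast
  also have "\<dots> \<le> (t - 1) * card (set P)"
    using \<open>distinct P\<close> assms(5) by (intro choose_two_le_of_less_double) (simp add: distinct_card)
  finally show ?thesis .
qed

lemma delete_sparse_vertex_set:
  assumes G: "simple_graph V E" and X: "X \<subseteq> V" "X \<noteq> {}"
    and sparse: "card {e \<in> E. e \<inter> X \<noteq> {}} \<le> (t - 1) * card X"
    and dense: "(t - 1) * card V < card E"
  shows "card (V - X) < card V" "(t - 1) * card (V - X) < card {e \<in> E. e \<inter> X = {}}"
proof -
  have "finite X" using G X(1) finite_subset unfolding simple_graph_def by blast
  have "card V = card (V - X) + card X"
    using G X(1) \<open>finite X\<close> unfolding simple_graph_def
    by (metis card_Diff_subset card_mono le_add_diff_inverse2)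
  then show "card (V - X) < card V" using X(2) \<open>finite X\<close> by auto
  from \<open>card V = _\<close> have V: "(t - 1) * card V = (t - 1) * card (V - X) + (t - 1) * card X"
    by (simp add: add_mult_distrib2)
  have "card E = card ({e \<in> E. e \<inter> X = {}} \<union> {e \<in> E. e \<inter> X \<noteq> {}})"
    by (rule arg_cong[where f = card]) blast
  also have "\<dots> = card {e \<in> E. e \<inter> X = {}} + card {e \<in> E. e \<inter> X \<noteq> {}}"
    using simple_graph_finite_edges[OF G] by (intro card_Un_disjoint) auto
  finally show "(t - 1) * card (V - X) < card {e \<in> E. e \<inter> X = {}}"
    using sparse dense V by linarith
qed

(* Induction on |V|: delete a vertex of degree less than t or, failing that, the vertex set of
   a longest path; either deletion keeps e(G) > (t - 1) |V|. *)
theorem erdos_gallai_path: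
  assumes "simple_graph V E" "(t - 1) * card V < card E"
  shows "\<exists>P. is_path V E P \<and> 2 * t \<le> length P"
  using assms
proof (induction "card V" arbitrary: V E rule: less_induct)
  case less
  note G = less.prems(1)
  have delete: "\<exists>P. is_path V E P \<and> 2 * t \<le> length P"
    if X: "X \<subseteq> V" "X \<noteq> {}" "card {e \<in> E. e \<inter> X \<noteq> {}} \<le> (t - 1) * card X" for X
  proof -
    note smaller = delete_sparse_vertex_set[OF G X less.prems(2)]
    obtain P where "is_path (V - X) {e \<in> E. e \<inter> X = {}} P" "2 * t \<le> length P"
      using less.hyps[OF smaller(1) simple_graph_delete_vertices[OF G] smaller(2)] by blast
    moreover have "{e \<in> E. e \<inter> X = {}} \<subseteq> E" by blast
    ultimately show ?thesis using is_path_mono[OF _ Diff_subset] by blast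
  qed
  show ?case
  proof (cases "\<exists>v\<in>V. deg_in E V v < t")
    case True
    then obtain v where v: "v \<in> V" "deg_in E V v < t" by blast
    have "{e \<in> E. e \<inter> {v} \<noteq> {}} = {e \<in> E. e \<subseteq> V \<and> v \<in> e}"
      using G unfolding simple_graph_def by blast
    then have "card {e \<in> E. e \<inter> {v} \<noteq> {}} \<le> (t - 1) * card {v}"
      using card_edges_at_vertex[of E v V] G v unfolding simple_graph_def by simp
    then show ?thesis using v(1) by (intro delete[of "{v}"]) auto
  next
    case False
    have "finite V" using G unfolding simple_graph_def by blast
    then obtain P where P: "is_longest_path V E P" using longest_path_exists by blast
    show ?thesis
    proof (cases "2 * t \<le> length P")
      case True
      then show ?thesis using P unfolding is_longest_path_def by blast
    next
      case short: False
      have "E \<noteq> {}" using less.prems(2) by auto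
      then have "V \<noteq> {}" using G unfolding simple_graph_def by fastforce
      then have "P \<noteq> []" using longest_path_Nil P by blast
      moreover have "set P \<subseteq> V" using P unfolding is_longest_path_def is_path_def by blast
      ultimately show ?thesis
        using short_longest_path_sparse[OF G P \<open>P \<noteq> []\<close>, of t] False short
        by (intro delete[of "set P"]) (auto simp: not_less)
    qed
  qed
qed

lemma path_contains_linear_forest:
  assumes P: "is_path V E xs" and len: "2 * (\<Sum>i=1..k. a i) \<le> length xs"
  shows "contains_linear_forest V E k a"
proof -
  define off where "off i = 2 * (\<Sum>j=1..<i. a j)" for i
  define Q where "Q i = take (2 * a i) (drop (off i) xs)" for i
  have off_Suc: "off (Suc i) = off i + 2 * a i" if "1 \<le> i" for i
    using that unfolding off_def by (simp add: sum.atLeastLessThan_Suc)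
  have off_mono: "off i \<le> off j" if "i \<le> j" for i j
    unfolding off_def using that by (intro mult_le_mono2 sum_mono2) auto
  have off_le: "off (Suc i) \<le> length xs" if "i \<in> {1..k}" for i
    using off_mono[of "Suc i" "Suc k"] that len unfolding off_def
    by (simp add: atLeastLessThanSuc_atLeastAtMost)
  have Q: "Q i = drop (off i) (take (off (Suc i)) xs)" if "1 \<le> i" for i
    using off_Suc[OF that] unfolding Q_def by (simp add: take_drop add.commute)
  have paths: "is_path V E (Q i) \<and> length (Q i) = 2 * a i" if "i \<in> {1..k}" for i
    using P off_le[OF that] off_Suc[of i] that unfolding Q_def
    by (auto simp: is_path_take is_path_drop)
  have disjoint: "set (Q i) \<inter> set (Q j) = {}" if "i \<in> {1..k}" "j \<in> {1..k}" "i < j" for i j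
  proof -
    have "set (Q i) \<subseteq> set (take (off j) xs)"
      using Q[of i] that off_mono[of "Suc i" j]
      by (metis atLeastAtMost_iff Suc_leI set_drop_subset set_take_subset_set_take subset_trans)
    moreover have "set (Q j) \<subseteq> set (drop (off j) xs)"
      unfolding Q_def by (rule set_take_subset)
    ultimately show ?thesis
      using set_take_disj_set_drop_if_distinct[of xs "off j" "off j"] P
      unfolding is_path_def by blast
  qed
  show ?thesis
    unfolding contains_linear_forest_def
  proof (intro exI[of _ Q] conjI ballI impI)
    fix i j assume "i \<in> {1..k}" "j \<in> {1..k}" "i \<noteq> j"
    then show "set (Q i) \<inter> set (Q j) = {}"
      using disjoint[of i j] disjoint[of j i] by (cases "i < j") auto
  qed (use paths in auto)
qed

lemma exists_core:
  assumes "\<forall>e\<in>E. card e = 2" "finite W"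
  shows "\<exists>S\<subseteq>W. (\<forall>v\<in>S. d \<le> deg_in E S v) \<and> (\<forall>v\<in>W - S. deg_in E S v < d) \<and>
           card {e \<in> E. e \<subseteq> W} \<le> card {e \<in> E. e \<subseteq> S} + (d - 1) * card (W - S)"
  using assms(2)
proof (induction "card W" arbitrary: W rule: less_induct)
  case less
  show ?case
  proof (cases "\<forall>v\<in>W. d \<le> deg_in E W v")
    case True
    then show ?thesis by (intro exI[of _ W]) auto
  next
    case False
    then obtain v where v: "v \<in> W" "deg_in E W v < d" by (auto simp: not_le)
    have smaller: "card (W - {v}) < card W" using card_Diff1_less[OF less.prems v(1)] .
    obtain S where S: "S \<subseteq> W - {v}" "\<forall>u\<in>S. d \<le> deg_in E S u" "\<forall>u\<in>W - {v} - S. deg_in E S u < d"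
      "card {e \<in> E. e \<subseteq> W - {v}} \<le> card {e \<in> E. e \<subseteq> S} + (d - 1) * card (W - {v} - S)"
      using less.hyps[OF smaller finite_Diff[OF less.prems]] by blast
    have "deg_in E S v \<le> deg_in E W v"
      unfolding deg_in_def using S(1) less.prems by (intro card_mono) auto
    with v S(3) have "\<forall>u\<in>W - S. deg_in E S u < d" by auto
    moreover have "W - S = insert v (W - {v} - S)" using S(1) v(1) by blast
    then have "card (W - S) = Suc (card (W - {v} - S))" using less.prems by simp
    moreover have "card {e \<in> E. e \<subseteq> W} = card {e \<in> E. e \<subseteq> W - {v}} + deg_in E W v"
      using card_edges_remove_vertex[OF assms(1) less.prems v(1)] .
    ultimately show ?thesis
      using S v(2) by (intro exI[of _ S]) auto
  qed
qed

lemma path_free_graph_core: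
  assumes G: "simple_graph V E" and t: "2 \<le> t"
    and no_path: "\<forall>P. is_path V E P \<longrightarrow> length P < 2 * t"
  obtains S where "S \<subseteq> V" "\<forall>v\<in>S. t - 1 \<le> deg_in E S v" "\<forall>v\<in>V - S. deg_in E S v \<le> t - 2"
    "card E + card (V - S) \<le> (t - 1) * card V"
proof -
  from t obtain r where r: "t = r + 2" by (metis add.commute le_add_diff_inverse)
  have V: "finite V" "\<forall>e\<in>E. card e = 2" "{e \<in> E. e \<subseteq> V} = E"
    using G unfolding simple_graph_def by auto
  obtain S where S: "S \<subseteq> V" "\<forall>v\<in>S. t - 1 \<le> deg_in E S v" "\<forall>v\<in>V - S. deg_in E S v < t - 1"
      "card {e \<in> E. e \<subseteq> V} \<le> card {e \<in> E. e \<subseteq> S} + (t - 1 - 1) * card (V - S)"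
    using exists_core[OF V(2,1), of "t - 1"] by blast
  have "card {e \<in> E. e \<subseteq> S} \<le> (t - 1) * card S"
  proof (rule ccontr)
    assume "\<not> ?thesis"
    then obtain P where "is_path S {e \<in> E. e \<subseteq> S} P" "2 * t \<le> length P"
      using erdos_gallai_path[OF simple_graph_induced[OF G S(1)], of t] by (auto simp: not_le)
    moreover from this(1) have "is_path V E P" by (rule is_path_mono[OF _ S(1)]) blast
    ultimately show False using no_path by fastforce
  qed
  moreover have "card V = card S + card (V - S)"
    using V(1) S(1) by (metis card_Diff_subset card_mono finite_subset le_add_diff_inverse)
  ultimately have "card E + card (V - S) \<le> (t - 1) * card V"
    using S(4) unfolding V(3) r by (simp add: algebra_simps)
  moreover have "\<forall>v\<in>V - S. deg_in E S v \<le> t - 2"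
    using S(3) unfolding r by (simp add: numeral_2_eq_2 less_Suc_eq_le)
  ultimately show thesis using that S(1,2) by blast
qed

lemma two_le_sum_last_two:
  fixes a :: "nat \<Rightarrow> nat"
  assumes "2 \<le> k" "1 \<le> a (k - 1)" "1 \<le> a k"
  shows "2 \<le> (\<Sum>i=1..k. a i)"
proof -
  have "(\<Sum>i\<in>{k - 1, k}. a i) \<le> (\<Sum>i=1..k. a i)"
    using assms(1) by (intro sum_mono2) auto
  then show ?thesis using assms by simp
qed

theorem lemma3p2:
  fixes V :: "'a set" and E :: "'a set set" and k :: nat and a :: "nat \<Rightarrow> nat"
  assumes "simple_graph V E"
    and "k \<ge> 2"
    and "\<forall>i\<in>{1..<k}. a i \<ge> a (Suc i)"
    and "a k \<ge> 1"
    and "int (card V) > (int (\<Sum>i=1..k. a i))^2 - int (\<Sum>i=1..k. a i) - 1"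
    and "\<not> contains_linear_forest V E k a"
    and "int (num_edges E) \<ge> (int (\<Sum>i=1..k. a i) - 1) * int (card V)
            - ((int (\<Sum>i=1..k. a i))^2 - int (\<Sum>i=1..k. a i) - 1)"
  shows "\<exists>S \<subseteq> V.
           int (card S) \<ge> int (card V) - ((int (\<Sum>i=1..k. a i))^2 - int (\<Sum>i=1..k. a i) - 1)
         \<and> (\<forall>v\<in>S. int (deg_in E S v) \<ge> int (\<Sum>i=1..k. a i) - 1)
         \<and> (\<forall>v\<in>V - S. int (deg_in E S v) \<le> int (\<Sum>i=1..k. a i) - 2)"
proof -
  define t where "t = (\<Sum>i=1..k. a i)"
  have "a k \<le> a (k - 1)" using assms(2,3) bspec[OF assms(3), of "k - 1"] by simp
  then have t: "2 \<le> t" unfolding t_def using assms(2,4) two_le_sum_last_two by simp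
  have "\<forall>P. is_path V E P \<longrightarrow> length P < 2 * t"
    using assms(6) path_contains_linear_forest unfolding t_def by (meson not_le)
  then obtain S where S: "S \<subseteq> V" "\<forall>v\<in>S. t - 1 \<le> deg_in E S v" "\<forall>v\<in>V - S. deg_in E S v \<le> t - 2"
      "card E + card (V - S) \<le> (t - 1) * card V"
    using path_free_graph_core[OF assms(1) t] by blast
  have t1: "int (t - 1) = int t - 1" and t2: "int (t - 2) = int t - 2" using t by simp_all
  have "int (card E) + int (card (V - S)) \<le> (int t - 1) * int (card V)"
    using S(4) unfolding t1[symmetric] of_nat_add[symmetric] of_nat_mult[symmetric] of_nat_le_iff .
  moreover have "int (card S) = int (card V) - int (card (V - S))"
    using assms(1) S(1) unfolding simple_graph_def by (simp add: card_Diff_subset card_mono finite_subset)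
  ultimately have "int (card S) \<ge> int (card V) - ((int t)^2 - int t - 1)"
    using assms(7) unfolding num_edges_def t_def[symmetric] by linarith
  moreover have "\<forall>v\<in>S. int t - 1 \<le> int (deg_in E S v)" using S(2) t1 by fastforce
  moreover have "\<forall>v\<in>V - S. int (deg_in E S v) \<le> int t - 2" using S(3) unfolding t2[symmetric] by simp
  ultimately show ?thesis using S(1) unfolding t_def by blast
qed

end
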